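(* Let $X=(X_1,\dots,X_T)$ be a random vector of nonnegative integer-valued random variables with finite second moments and $\mathrm{Var}(X_t)>0$ for all $t$. For $p\in(0,1]$, let $Y^{(p)}=(Y_1,\dots,Y_T)$ be defined by: conditionally on $X$, the $Y_t$ are independent with $Y_t\sim B(X_t,p)$ (Binomial with $X_t$ trials and success probability $p$). Then for all $i,j$, the magnitude $|\rho_{Y_i,Y_j}|$ of the Pearson correlation between $Y_i$ and $Y_j$ is a monotonically non-decreasing function of $p$ on $(0,1]$.
   Context: $X$ is the ground truth time series of event counts and $Y$ the observed signal in which each event is observed independently with probability $p$ (the sampling rate). The Pearson correlation is $\rho_{Y_i,Y_j}=\mathrm{Cov}(Y_i,Y_j)/(\sigma_{Y_i}\sigma_{Y_j})$. *)

theory Defs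
  imports "HOL-Probability.Probability"
begin

definition pmf_cov :: "'a pmf \<Rightarrow> ('a \<Rightarrow> real) \<Rightarrow> ('a \<Rightarrow> real) \<Rightarrow> real" where
  "pmf_cov M f g = measure_pmf.expectation M
     (\<lambda>x. (f x - measure_pmf.expectation M f) * (g x - measure_pmf.expectation M g))"

definition pmf_var :: "'a pmf \<Rightarrow> ('a \<Rightarrow> real) \<Rightarrow> real" where
  "pmf_var M f = measure_pmf.variance M f"

definition pearson :: "'a pmf \<Rightarrow> ('a \<Rightarrow> real) \<Rightarrow> ('a \<Rightarrow> real) \<Rightarrow> real" where
  "pearson M f g = pmf_cov M f g / (sqrt (pmf_var M f) * sqrt (pmf_var M g))"

definition thinned :: "real \<Rightarrow> ('t::finite \<Rightarrow> nat) pmf \<Rightarrow> ('t \<Rightarrow> nat) pmf" where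
  "thinned p X = bind_pmf X (\<lambda>x. Pi_pmf UNIV 0 (\<lambda>t. binomial_pmf (x t) p))"

end

theory Submission
  imports Defs
begin

(* Conditionally on X = x the coordinates of Y are independent Binomial(x t, p) variables, so
   E Y_t = p E X_t, Var Y_t = p (1 - p) E X_t + p^2 Var X_t and, for i \<noteq> j,
   Cov(Y_i, Y_j) = p^2 Cov(X_i, X_j). Cancelling p^2 gives
     rho(Y_i, Y_j) = Cov(X_i, X_j) / sqrt ((Var X_i + (1/p - 1) E X_i) (Var X_j + (1/p - 1) E X_j)),
   whose denominator decreases as p grows, since the means are nonnegative. For i = j the
   correlation is 1, because Var Y_t > 0. *)

lemma square_integrable_imp_integrable_pmf:
  fixes M :: "'a pmf" and f :: "'a \<Rightarrow> real"
  assumes "integrable M (\<lambda>x. (f x)\<^sup>2)"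
  shows "integrable M f"
  using assms by (rule measure_pmf.square_integrable_imp_integrable[rotated]) simp

lemma square_integrable_imp_integrable_mult:
  fixes M :: "'a pmf" and f g :: "'a \<Rightarrow> real"
  assumes "integrable M (\<lambda>x. (f x)\<^sup>2)" and "integrable M (\<lambda>x. (g x)\<^sup>2)"
  shows "integrable M (\<lambda>x. f x * g x)"
proof (rule Bochner_Integration.integrable_bound[OF Bochner_Integration.integrable_add[OF assms]])
  have "\<bar>f x * g x\<bar> \<le> (f x)\<^sup>2 + (g x)\<^sup>2" for x
  proof -
    have "2 * (\<bar>f x\<bar> * \<bar>g x\<bar>) \<le> (f x)\<^sup>2 + (g x)\<^sup>2"
      using sum_squares_bound[of "\<bar>f x\<bar>" "\<bar>g x\<bar>"] by (simp add: mult.assoc)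
    moreover have "0 \<le> \<bar>f x\<bar> * \<bar>g x\<bar>"
      by simp
    ultimately show ?thesis
      unfolding abs_mult by linarith
  qed
  then show "AE x in M. norm (f x * g x) \<le> norm ((f x)\<^sup>2 + (g x)\<^sup>2)"
    by simp
qed simp

lemma pmf_cov_eq:
  fixes M :: "'a pmf"
  assumes "integrable M f" "integrable M g" "integrable M (\<lambda>x. f x * g x)"
  shows "pmf_cov M f g = measure_pmf.expectation M (\<lambda>x. f x * g x)
     - measure_pmf.expectation M f * measure_pmf.expectation M g"
proof -
  define a where "a = measure_pmf.expectation M f"
  define b where "b = measure_pmf.expectation M g"
  have "pmf_cov M f g = measure_pmf.expectation M (\<lambda>x. (f x * g x - a * g x) - (b * f x - a * b))"
    unfolding pmf_cov_def a_def[symmetric] b_def[symmetric] by (simp add: algebra_simps)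
  also have "\<dots> = measure_pmf.expectation M (\<lambda>x. f x * g x) - a * b"
    using assms by (simp add: a_def b_def)
  finally show ?thesis by (simp add: a_def b_def)
qed

lemma pearson_self:
  assumes "pmf_var M f > 0"
  shows "pearson M f f = 1"
proof -
  have "pmf_cov M f f = pmf_var M f"
    unfolding pmf_cov_def pmf_var_def by (simp add: power2_eq_square)
  then show ?thesis
    using assms by (simp add: pearson_def)
qed

lemma expectation_bind_pmf_nonneg:
  fixes M :: "'a pmf" and N :: "'a \<Rightarrow> 'b pmf" and f :: "'b \<Rightarrow> real"
  assumes nonneg: "\<And>y. 0 \<le> f y" and inner: "\<And>x. integrable (N x) f"
    and outer: "integrable M (\<lambda>x. measure_pmf.expectation (N x) f)"
  shows "integrable (bind_pmf M N) f"
    and "measure_pmf.expectation (bind_pmf M N) f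
      = measure_pmf.expectation M (\<lambda>x. measure_pmf.expectation (N x) f)" (is "_ = ?rhs")
proof -
  have "(\<integral>\<^sup>+y. f y \<partial>bind_pmf M N) = (\<integral>\<^sup>+x. measure_pmf.expectation (N x) f \<partial>M)"
    using inner nonneg by (simp add: nn_integral_eq_integral)
  also have "\<dots> = ?rhs"
    using outer nonneg by (simp add: nn_integral_eq_integral)
  finally have nn: "(\<integral>\<^sup>+y. f y \<partial>bind_pmf M N) = ?rhs" .
  then show "integrable (bind_pmf M N) f"
    using nonneg by (intro integrableI_nn_integral_finite) auto
  show "measure_pmf.expectation (bind_pmf M N) f = ?rhs"
    using nn nonneg by (subst integral_eq_nn_integral) auto
qed

lemma expectation_binomial_pmf_Suc:
  fixes f :: "nat \<Rightarrow> real"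
  assumes p: "p \<in> {0..1}"
  shows "measure_pmf.expectation (binomial_pmf (Suc n) p) f =
    p * measure_pmf.expectation (binomial_pmf n p) (\<lambda>k. f (Suc k))
    + (1 - p) * measure_pmf.expectation (binomial_pmf n p) f"
proof -
  have "binomial_pmf (Suc n) p =
    bernoulli_pmf p \<bind> (\<lambda>b. map_pmf (\<lambda>k. (if b then 1 else 0) + k) (binomial_pmf n p))"
    using p by (simp add: binomial_pmf_Suc map_pmf_def)
  also have "measure_pmf.expectation \<dots> f =
    (\<Sum>b\<in>UNIV. pmf (bernoulli_pmf p) b *
       measure_pmf.expectation (map_pmf (\<lambda>k. (if b then 1 else 0) + k) (binomial_pmf n p)) f)"
    using p by (subst pmf_expectation_bind[where A = UNIV]) (auto simp: finite_set_pmf_binomial_pmf[OF p])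
  finally show ?thesis
    using p by (simp add: UNIV_bool)
qed

lemma expectation_binomial_pmf:
  assumes p: "p \<in> {0..1}"
  shows "measure_pmf.expectation (binomial_pmf n p) real = real n * p"
proof (induction n)
  case 0
  then show ?case using p by (simp add: binomial_pmf_0)
next
  case (Suc n)
  then show ?case
    using p by (simp add: expectation_binomial_pmf_Suc algebra_simps)
qed

lemma second_moment_binomial_pmf:
  assumes p: "p \<in> {0..1}"
  shows "measure_pmf.expectation (binomial_pmf n p) (\<lambda>k. (real k)\<^sup>2)
    = real n * p * (1 - p) + (real n * p)\<^sup>2"
proof (induction n)
  case 0
  then show ?case using p by (simp add: binomial_pmf_0)
next
  case (Suc n)
  have "measure_pmf.expectation (binomial_pmf n p) (\<lambda>k. (real (Suc k))\<^sup>2) =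
    1 + 2 * measure_pmf.expectation (binomial_pmf n p) real
      + measure_pmf.expectation (binomial_pmf n p) (\<lambda>k. (real k)\<^sup>2)"
    using p by (simp add: power2_eq_square algebra_simps)
  then show ?case
    using p Suc by (simp add: expectation_binomial_pmf_Suc expectation_binomial_pmf power2_eq_square algebra_simps)
qed

lemma finite_set_pmf_Pi_pmf:
  assumes "finite A" and "\<And>a. a \<in> A \<Longrightarrow> finite (set_pmf (P a))"
  shows "finite (set_pmf (Pi_pmf A d P))"
  using assms by (auto simp: set_Pi_pmf)

lemma expectation_Pi_pmf_component:
  fixes P :: "'a \<Rightarrow> 'b pmf" and f :: "'b \<Rightarrow> real"
  assumes "finite A" and "i \<in> A"
  shows "measure_pmf.expectation (Pi_pmf A d P) (\<lambda>y. f (y i)) = measure_pmf.expectation (P i) f"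
proof -
  have "measure_pmf.expectation (Pi_pmf A d P) (\<lambda>y. f (y i))
      = measure_pmf.expectation (map_pmf (\<lambda>y. y i) (Pi_pmf A d P)) f"
    by simp
  then show ?thesis
    using assms by (simp add: Pi_pmf_component)
qed

lemma expectation_Pi_pmf_mult_components:
  fixes P :: "'a \<Rightarrow> 'b pmf" and f g :: "'b \<Rightarrow> real"
  assumes A: "finite A" "i \<in> A" "j \<in> A" and ij: "i \<noteq> j"
    and integrable: "integrable (P i) f" "integrable (P j) g"
    and nonneg: "\<And>v. 0 \<le> f v" "\<And>v. 0 \<le> g v"
  shows "measure_pmf.expectation (Pi_pmf A d P) (\<lambda>y. f (y i) * g (y j))
    = measure_pmf.expectation (P i) f * measure_pmf.expectation (P j) g"
proof -
  define h where "h = (\<lambda>t v. if t = i then f v else if t = j then g v else 1)"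
  have prod_h: "(\<Prod>t\<in>A. h t (y t)) = f (y i) * g (y j)" for y
  proof -
    have "(\<Prod>t\<in>A. h t (y t)) = (\<Prod>t\<in>{i, j}. h t (y t))"
      using A by (intro prod.mono_neutral_right) (auto simp: h_def)
    then show ?thesis
      using ij by (simp add: h_def)
  qed
  have integrable_h: "integrable (P t) (h t)" for t
    using integrable by (cases "t = i"; cases "t = j") (simp_all add: h_def)
  have "measure_pmf.expectation (Pi_pmf A d P) (\<lambda>y. f (y i) * g (y j))
      = measure_pmf.expectation (Pi_pmf A d P) (\<lambda>y. \<Prod>t\<in>A. h t (y t))"
    by (simp only: prod_h)
  also have "\<dots> = (\<Prod>t\<in>A. measure_pmf.expectation (P t) (h t))"
    using A integrable_h nonneg by (intro expectation_prod_Pi_pmf) (auto simp: h_def)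
  also have "\<dots> = (\<Prod>t\<in>{i, j}. measure_pmf.expectation (P t) (h t))"
    using A by (intro prod.mono_neutral_right) (auto simp: h_def)
  also have "\<dots> = measure_pmf.expectation (P i) f * measure_pmf.expectation (P j) g"
    using ij by (simp add: h_def)
  finally show ?thesis .
qed

definition thinning_kernel :: "real \<Rightarrow> ('t::finite \<Rightarrow> nat) \<Rightarrow> ('t \<Rightarrow> nat) pmf" where
  "thinning_kernel p x = Pi_pmf UNIV 0 (\<lambda>t. binomial_pmf (x t) p)"

lemma thinned_eq_bind_thinning_kernel: "thinned p X = X \<bind> thinning_kernel p"
  unfolding thinned_def thinning_kernel_def[abs_def] ..

lemma integrable_thinning_kernel:
  fixes f :: "('t::finite \<Rightarrow> nat) \<Rightarrow> real"
  assumes "p \<in> {0..1}"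
  shows "integrable (thinning_kernel p x) f"
  unfolding thinning_kernel_def using assms
  by (intro integrable_measure_pmf_finite finite_set_pmf_Pi_pmf) auto

lemma expectation_thinning_kernel_component:
  fixes f :: "nat \<Rightarrow> real"
  shows "measure_pmf.expectation (thinning_kernel p x) (\<lambda>y. f (y t))
    = measure_pmf.expectation (binomial_pmf (x t) p) f"
  unfolding thinning_kernel_def by (simp add: expectation_Pi_pmf_component)

lemma expectation_thinning_kernel_mult:
  assumes "p \<in> {0..1}" and "i \<noteq> j"
  shows "measure_pmf.expectation (thinning_kernel p x) (\<lambda>y. real (y i) * real (y j))
    = real (x i) * p * (real (x j) * p)"
  unfolding thinning_kernel_def using assms
  by (simp add: expectation_Pi_pmf_mult_components expectation_binomial_pmf)

lemma expectation_thinned: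
  fixes X :: "('t::finite \<Rightarrow> nat) pmf" and f g :: "('t \<Rightarrow> nat) \<Rightarrow> real"
  assumes p: "p \<in> {0..1}" and nonneg: "\<And>y. 0 \<le> f y"
    and kernel: "\<And>x. measure_pmf.expectation (thinning_kernel p x) f = g x"
    and integrable: "integrable X g"
  shows "integrable (thinned p X) f" and "measure_pmf.expectation (thinned p X) f = measure_pmf.expectation X g"
proof -
  have outer: "integrable X (\<lambda>x. measure_pmf.expectation (thinning_kernel p x) f)"
    using integrable by (simp add: kernel)
  show "integrable (thinned p X) f"
    unfolding thinned_eq_bind_thinning_kernel using nonneg integrable_thinning_kernel[OF p] outer
    by (rule expectation_bind_pmf_nonneg)
  have "measure_pmf.expectation (thinned p X) f
      = measure_pmf.expectation X (\<lambda>x. measure_pmf.expectation (thinning_kernel p x) f)"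
    unfolding thinned_eq_bind_thinning_kernel using nonneg integrable_thinning_kernel[OF p] outer
    by (rule expectation_bind_pmf_nonneg)
  then show "measure_pmf.expectation (thinned p X) f = measure_pmf.expectation X g"
    by (simp add: kernel)
qed

lemma expectation_thinned_component:
  fixes X :: "('t::finite \<Rightarrow> nat) pmf"
  assumes p: "p \<in> {0..1}" and integrable: "integrable X (\<lambda>x. real (x t))"
  shows "integrable (thinned p X) (\<lambda>y. real (y t))"
    and "measure_pmf.expectation (thinned p X) (\<lambda>y. real (y t))
      = p * measure_pmf.expectation X (\<lambda>x. real (x t))"
proof -
  have "measure_pmf.expectation (thinning_kernel p x) (\<lambda>y. real (y t)) = p * real (x t)" for x
    using p by (simp add: expectation_thinning_kernel_component expectation_binomial_pmf)
  from expectation_thinned[OF p _ this] integrable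
  show "integrable (thinned p X) (\<lambda>y. real (y t))"
    and "measure_pmf.expectation (thinned p X) (\<lambda>y. real (y t))
      = p * measure_pmf.expectation X (\<lambda>x. real (x t))"
    by simp_all
qed

lemma second_moment_thinned_component:
  fixes X :: "('t::finite \<Rightarrow> nat) pmf"
  assumes p: "p \<in> {0..1}" and square_integrable: "integrable X (\<lambda>x. (real (x t))\<^sup>2)"
  shows "integrable (thinned p X) (\<lambda>y. (real (y t))\<^sup>2)"
    and "measure_pmf.expectation (thinned p X) (\<lambda>y. (real (y t))\<^sup>2)
      = p * (1 - p) * measure_pmf.expectation X (\<lambda>x. real (x t))
        + p\<^sup>2 * measure_pmf.expectation X (\<lambda>x. (real (x t))\<^sup>2)"
proof -
  have integrable: "integrable X (\<lambda>x. real (x t))"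
    using square_integrable by (rule square_integrable_imp_integrable_pmf)
  have "measure_pmf.expectation (thinning_kernel p x) (\<lambda>y. (real (y t))\<^sup>2)
      = p * (1 - p) * real (x t) + p\<^sup>2 * (real (x t))\<^sup>2" for x
    using p by (simp add: expectation_thinning_kernel_component[where f = "\<lambda>k. (real k)\<^sup>2"]
        second_moment_binomial_pmf power_mult_distrib)
  from expectation_thinned[OF p _ this] integrable square_integrable
  show "integrable (thinned p X) (\<lambda>y. (real (y t))\<^sup>2)"
    and "measure_pmf.expectation (thinned p X) (\<lambda>y. (real (y t))\<^sup>2)
      = p * (1 - p) * measure_pmf.expectation X (\<lambda>x. real (x t))
        + p\<^sup>2 * measure_pmf.expectation X (\<lambda>x. (real (x t))\<^sup>2)"
    by simp_all
qed

lemma expectation_thinned_mult_components: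
  fixes X :: "('t::finite \<Rightarrow> nat) pmf"
  assumes p: "p \<in> {0..1}" and ij: "i \<noteq> j"
    and integrable: "integrable X (\<lambda>x. real (x i) * real (x j))"
  shows "integrable (thinned p X) (\<lambda>y. real (y i) * real (y j))"
    and "measure_pmf.expectation (thinned p X) (\<lambda>y. real (y i) * real (y j))
      = p\<^sup>2 * measure_pmf.expectation X (\<lambda>x. real (x i) * real (x j))"
proof -
  have "measure_pmf.expectation (thinning_kernel p x) (\<lambda>y. real (y i) * real (y j))
      = p\<^sup>2 * (real (x i) * real (x j))" for x
    using p ij by (simp add: expectation_thinning_kernel_mult power2_eq_square)
  from expectation_thinned[OF p _ this] integrable
  show "integrable (thinned p X) (\<lambda>y. real (y i) * real (y j))"
    and "measure_pmf.expectation (thinned p X) (\<lambda>y. real (y i) * real (y j))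
      = p\<^sup>2 * measure_pmf.expectation X (\<lambda>x. real (x i) * real (x j))"
    by simp_all
qed

lemma pmf_var_thinned:
  fixes X :: "('t::finite \<Rightarrow> nat) pmf"
  assumes p: "p \<in> {0..1}" and square_integrable: "integrable X (\<lambda>x. (real (x t))\<^sup>2)"
  shows "pmf_var (thinned p X) (\<lambda>y. real (y t))
    = p * (1 - p) * measure_pmf.expectation X (\<lambda>x. real (x t))
      + p\<^sup>2 * pmf_var X (\<lambda>x. real (x t))"
proof -
  have integrable: "integrable X (\<lambda>x. real (x t))"
    using square_integrable by (rule square_integrable_imp_integrable_pmf)
  note first = expectation_thinned_component[OF p integrable]
    and second = second_moment_thinned_component[OF p square_integrable]
  have "pmf_var (thinned p X) (\<lambda>y. real (y t))
      = measure_pmf.expectation (thinned p X) (\<lambda>y. (real (y t))\<^sup>2)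
        - (measure_pmf.expectation (thinned p X) (\<lambda>y. real (y t)))\<^sup>2"
    unfolding pmf_var_def using first(1) second(1) by (rule measure_pmf.variance_eq)
  also have "\<dots> = p * (1 - p) * measure_pmf.expectation X (\<lambda>x. real (x t))
      + p\<^sup>2 * (measure_pmf.expectation X (\<lambda>x. (real (x t))\<^sup>2)
        - (measure_pmf.expectation X (\<lambda>x. real (x t)))\<^sup>2)"
    unfolding first(2) second(2) by (simp add: power_mult_distrib right_diff_distrib)
  also have "measure_pmf.expectation X (\<lambda>x. (real (x t))\<^sup>2)
        - (measure_pmf.expectation X (\<lambda>x. real (x t)))\<^sup>2
      = pmf_var X (\<lambda>x. real (x t))"
    unfolding pmf_var_def using integrable square_integrable by (rule measure_pmf.variance_eq[symmetric])
  finally show ?thesis .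
qed

lemma pmf_cov_thinned:
  fixes X :: "('t::finite \<Rightarrow> nat) pmf"
  assumes p: "p \<in> {0..1}" and ij: "i \<noteq> j"
    and square_integrable:
      "integrable X (\<lambda>x. (real (x i))\<^sup>2)" "integrable X (\<lambda>x. (real (x j))\<^sup>2)"
  shows "pmf_cov (thinned p X) (\<lambda>y. real (y i)) (\<lambda>y. real (y j))
    = p\<^sup>2 * pmf_cov X (\<lambda>x. real (x i)) (\<lambda>x. real (x j))"
proof -
  note integrable = square_integrable[THEN square_integrable_imp_integrable_pmf]
  have integrable_mult: "integrable X (\<lambda>x. real (x i) * real (x j))"
    using square_integrable by (rule square_integrable_imp_integrable_mult)
  note first_i = expectation_thinned_component[OF p integrable(1)]
    and first_j = expectation_thinned_component[OF p integrable(2)]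
    and mixed = expectation_thinned_mult_components[OF p ij integrable_mult]
  have "pmf_cov (thinned p X) (\<lambda>y. real (y i)) (\<lambda>y. real (y j))
      = p\<^sup>2 * (measure_pmf.expectation X (\<lambda>x. real (x i) * real (x j))
        - measure_pmf.expectation X (\<lambda>x. real (x i)) * measure_pmf.expectation X (\<lambda>x. real (x j)))"
    using first_i(1) first_j(1) mixed(1)
    by (simp add: pmf_cov_eq first_i(2) first_j(2) mixed(2) power2_eq_square algebra_simps)
  also have "\<dots> = p\<^sup>2 * pmf_cov X (\<lambda>x. real (x i)) (\<lambda>x. real (x j))"
    using integrable integrable_mult by (simp add: pmf_cov_eq)
  finally show ?thesis .
qed

lemma pearson_thinned:
  fixes X :: "('t::finite \<Rightarrow> nat) pmf"
  assumes p: "0 < p" "p \<le> 1" and ij: "i \<noteq> j"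
    and square_integrable:
      "integrable X (\<lambda>x. (real (x i))\<^sup>2)" "integrable X (\<lambda>x. (real (x j))\<^sup>2)"
  shows "pearson (thinned p X) (\<lambda>y. real (y i)) (\<lambda>y. real (y j))
    = pmf_cov X (\<lambda>x. real (x i)) (\<lambda>x. real (x j))
      / (sqrt (pmf_var X (\<lambda>x. real (x i)) + (1 / p - 1) * measure_pmf.expectation X (\<lambda>x. real (x i)))
         * sqrt (pmf_var X (\<lambda>x. real (x j)) + (1 / p - 1) * measure_pmf.expectation X (\<lambda>x. real (x j))))"
proof -
  have p01: "p \<in> {0..1}"
    using p by simp
  have var: "pmf_var (thinned p X) (\<lambda>y. real (y t))
      = p\<^sup>2 * (pmf_var X (\<lambda>x. real (x t))
        + (1 / p - 1) * measure_pmf.expectation X (\<lambda>x. real (x t)))"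
    if "integrable X (\<lambda>x. (real (x t))\<^sup>2)" for t
  proof -
    have "pmf_var (thinned p X) (\<lambda>y. real (y t))
        = p * (1 - p) * measure_pmf.expectation X (\<lambda>x. real (x t))
      + p\<^sup>2 * pmf_var X (\<lambda>x. real (x t))"
      using p01 that by (rule pmf_var_thinned)
    also have "\<dots> = p\<^sup>2 * (pmf_var X (\<lambda>x. real (x t))
        + (1 / p - 1) * measure_pmf.expectation X (\<lambda>x. real (x t)))"
      using p by (simp add: field_simps power2_eq_square)
    finally show ?thesis .
  qed
  have sqrt: "sqrt (p\<^sup>2 * a) = p * sqrt a" for a
    using p by (simp add: real_sqrt_mult)
  show ?thesis
    unfolding pearson_def pmf_cov_thinned[OF p01 ij square_integrable] var[OF square_integrable(1)]
      var[OF square_integrable(2)] sqrt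
    using p by (simp add: power2_eq_square)
qed

lemma pearson_thinned_self:
  fixes X :: "('t::finite \<Rightarrow> nat) pmf"
  assumes p: "0 < p" "p \<le> 1" and square_integrable: "integrable X (\<lambda>x. (real (x t))\<^sup>2)"
    and var_pos: "pmf_var X (\<lambda>x. real (x t)) > 0"
  shows "pearson (thinned p X) (\<lambda>y. real (y t)) (\<lambda>y. real (y t)) = 1"
proof (rule pearson_self)
  have "pmf_var (thinned p X) (\<lambda>y. real (y t))
      = p * (1 - p) * measure_pmf.expectation X (\<lambda>x. real (x t))
      + p\<^sup>2 * pmf_var X (\<lambda>x. real (x t))"
    using p by (intro pmf_var_thinned square_integrable) simp
  also have "\<dots> > 0"
    using p var_pos by (intro add_nonneg_pos) simp_all
  finally show "pmf_var (thinned p X) (\<lambda>y. real (y t)) > 0" .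
qed

lemma abs_divide_sqrt_mult_antimono:
  fixes a b m n s s' c :: real
  assumes "0 < a" "0 < b" "0 \<le> m" "0 \<le> n" "0 \<le> s" "s \<le> s'"
  shows "\<bar>c / (sqrt (a + s' * m) * sqrt (b + s' * n))\<bar>
    \<le> \<bar>c / (sqrt (a + s * m) * sqrt (b + s * n))\<bar>"
proof -
  have pos: "0 < a + s * m" "0 < b + s * n" "0 < a + s' * m" "0 < b + s' * n"
    using assms by (simp_all add: add_pos_nonneg)
  have "sqrt (a + s * m) * sqrt (b + s * n) \<le> sqrt (a + s' * m) * sqrt (b + s' * n)"
    using assms pos by (intro mult_mono) (auto intro: mult_right_mono)
  then have "\<bar>c\<bar> / (sqrt (a + s' * m) * sqrt (b + s' * n))
      \<le> \<bar>c\<bar> / (sqrt (a + s * m) * sqrt (b + s * n))"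
    using pos by (intro divide_left_mono) auto
  then show ?thesis
    using pos by (simp add: abs_divide abs_mult abs_of_nonneg)
qed

theorem corollary2:
  fixes X :: "('t::finite \<Rightarrow> nat) pmf" and i j :: 't and p q :: real
  assumes second_moments: "\<And>t. integrable (measure_pmf X) (\<lambda>x. (real (x t))\<^sup>2)"
    and var_pos: "\<And>t. pmf_var X (\<lambda>x. real (x t)) > 0"
    and p_pos: "0 < p" and pq: "p \<le> q" and q_le: "q \<le> 1"
  shows "\<bar>pearson (thinned p X) (\<lambda>y. real (y i)) (\<lambda>y. real (y j))\<bar>
         \<le> \<bar>pearson (thinned q X) (\<lambda>y. real (y i)) (\<lambda>y. real (y j))\<bar>"
proof (cases "i = j")
  case True
  then show ?thesis
    using p_pos pq q_le by (simp add: pearson_thinned_self second_moments var_pos)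
next
  case False
  have p_le: "p \<le> 1" and q_pos: "0 < q"
    using p_pos pq q_le by simp_all
  have "0 \<le> 1 / q - 1" "1 / q - 1 \<le> 1 / p - 1"
    using p_pos pq q_le by (simp_all add: frac_le)
  then show ?thesis
    unfolding pearson_thinned[OF p_pos p_le False second_moments second_moments]
      pearson_thinned[OF q_pos q_le False second_moments second_moments]
    by (intro abs_divide_sqrt_mult_antimono var_pos) simp_all
qed

end
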